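(* Let $n=2^s$, $q=2^r$ ($s,r$ positive integers). The map $\mathbb{F}_q\to C^{\perp}(SL(n,q))$, $a\mapsto c(a)=(tr(a\,Tr(g_1)),\dots,tr(a\,Tr(g_N)))$, is an $\mathbb{F}_2$-linear isomorphism.
   Context: $\mathbb{F}_q$ is the field with $q$ elements and $tr:\mathbb{F}_q\to\mathbb{F}_2$ the absolute trace. $N=|SL(n,q)|$, $g_1,\dots,g_N$ is a fixed ordering of $SL(n,q)$, $Tr$ is the matrix trace, $v=(Tr(g_1),\dots,Tr(g_N))\in\mathbb{F}_q^N$, $C(SL(n,q))=\{u\in\mathbb{F}_2^N:u\cdot v=0\}$ (dot product in $\mathbb{F}_q$), and $C^\perp(SL(n,q))$ is its dual in $\mathbb{F}_2^N$ under the standard inner product. *)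

theory Defs
  imports "HOL-Analysis.Analysis" "HOL-Library.Z2"
begin

text \<open>F_2 is modelled by the two-element field bit; F_2 is embedded in any ring via of_bit.\<close>

text \<open>Absolute trace F_q -> F_2 for q = 2^r: tr x = x + x^2 + ... + x^(2^(r-1)), which lies in {0,1}.\<close>
definition abs_tr :: "nat \<Rightarrow> 'a::field \<Rightarrow> bit" where
  "abs_tr r x = (if (\<Sum>i<r. x ^ (2 ^ i)) = 0 then 0 else 1)"

definition SL :: "('a::field ^'n^'n) set" where
  "SL = {g. det g = 1}"

text \<open>Binary words of length N = |SL(n,q)| are functions on SL(n,q) (coordinates indexed
  by the group elements themselves), vanishing outside SL(n,q).\<close>
definition words :: "(('a::field ^'n^'n) \<Rightarrow> bit) set" where
  "words = {u. \<forall>g. g \<notin> SL \<longrightarrow> u g = 0}"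

definition code_C :: "(('a::field ^'n^'n) \<Rightarrow> bit) set" where
  "code_C = {u \<in> words. (\<Sum>g\<in>SL. of_bit (u g) * trace g) = (0::'a)}"

definition code_C_perp :: "(('a::field ^'n^'n) \<Rightarrow> bit) set" where
  "code_C_perp = {w \<in> words. \<forall>u \<in> (code_C :: (('a ^'n^'n) \<Rightarrow> bit) set).
                    (\<Sum>g\<in>SL. u g * w g) = 0}"

definition cmap :: "nat \<Rightarrow> 'a::field \<Rightarrow> (('a ^'n^'n) \<Rightarrow> bit)" where
  "cmap r a = (\<lambda>g. if g \<in> SL then abs_tr r (a * trace g) else 0)"

end

theory Submission
  imports Defs "HOL-Computational_Algebra.Polynomial"
begin

text \<open>Since \<open>q = 2^r\<close>, the absolute trace \<open>tr\<close> is additive and, being a polynomial of degree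
  \<open>2^(r-1) < q\<close>, not identically zero; a character-sum count then shows that every additive map
  \<open>\<bbbF>\<^sub>q \<rightarrow> \<bbbF>\<^sub>2\<close> is \<open>x \<mapsto> tr(a x)\<close> for some \<open>a\<close>. For \<open>n \<ge> 2\<close> every element of \<open>\<bbbF>\<^sub>q\<close> is the trace
  of a matrix in \<open>SL(n,q)\<close>. A word \<open>w\<close> orthogonal to \<open>C\<close> is orthogonal in particular to the
  weight-three words supported on \<open>g\<^sub>1, g\<^sub>2, g\<^sub>3\<close> with \<open>Tr g\<^sub>1 + Tr g\<^sub>2 + Tr g\<^sub>3 = 0\<close>, which forces
  \<open>w g = f (Tr g)\<close> with \<open>f\<close> additive, i.e. \<open>w = c(a)\<close>. Conversely \<open>c(a) \<in> C\<^sup>\<bottom>\<close> by linearity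
  of \<open>tr\<close>, and \<open>c\<close> is injective because \<open>Tr\<close> and \<open>tr\<close> are onto.\<close>

lemma card_eq_two_power_imp_pos:
  assumes "CARD('a::{field,finite}) = 2 ^ r"
  shows "r > 0"
proof (rule ccontr)
  assume "\<not> r > 0"
  then have "CARD('a) = 1" using assms by simp
  then have "(0::'a) = 1" by (metis UNIV_I card_1_singletonE singletonD)
  then show False by simp
qed

lemma of_nat_card_eq_0: "of_nat CARD('a) = (0::'a::{ring_1,finite})"
proof -
  have "(\<Sum>y\<in>UNIV. y + (1::'a)) = (\<Sum>y\<in>UNIV. y)"
    by (rule sum.reindex_bij_witness[where i="\<lambda>y. y - 1" and j="\<lambda>y. y + 1"]) auto
  then show ?thesis by (simp add: sum.distrib)
qed

lemma CHAR_eq_2_if_card_eq_two_power: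
  assumes "CARD('a::{field,finite}) = 2 ^ r"
  shows "CHAR('a) = 2"
proof -
  have "prime CHAR('a)"
    by (intro prime_CHAR_semidom finite_imp_CHAR_pos) simp
  moreover have "CHAR('a) dvd 2 ^ r"
    using of_nat_card_eq_0[where 'a='a] assms by (simp only: of_nat_eq_0_iff_char_dvd)
  ultimately have "CHAR('a) dvd 2"
    using prime_dvd_power by blast
  with \<open>prime CHAR('a)\<close> show ?thesis
    using primes_dvd_imp_eq two_is_prime_nat by blast
qed

lemma two_eq_zero_CHAR_2: "CHAR('a::ring_1) = 2 \<Longrightarrow> (2::'a) = 0"
  using of_nat_CHAR[where 'a='a] by simp

lemma add_self_CHAR_2: "CHAR('a::ring_1) = 2 \<Longrightarrow> x + x = (0::'a)"
proof -
  assume "CHAR('a) = 2"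
  then have "x + x = x + - x" by (simp only: uminus_CHAR_2)
  then show ?thesis by simp
qed

lemma power_two_power_add_CHAR_2:
  fixes x y :: "'a::comm_ring_1"
  assumes "CHAR('a) = 2"
  shows "(x + y) ^ 2 ^ i = x ^ 2 ^ i + y ^ 2 ^ i"
proof (induction i)
  case (Suc i)
  have "(x + y) ^ 2 ^ Suc i = ((x + y) ^ 2 ^ i) ^ 2"
    by (simp only: power_Suc2 power_mult)
  also have "\<dots> = (x ^ 2 ^ i) ^ 2 + (y ^ 2 ^ i) ^ 2 + 2 * x ^ 2 ^ i * y ^ 2 ^ i"
    by (simp only: Suc power2_sum)
  also have "\<dots> = x ^ 2 ^ Suc i + y ^ 2 ^ Suc i"
    by (simp only: two_eq_zero_CHAR_2[OF assms] power_Suc2 power_mult mult_zero_left add_0_right)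
  finally show ?case .
qed simp

lemma of_bit_add_CHAR_2: "CHAR('a::ring_1) = 2 \<Longrightarrow> (of_bit (b + c) :: 'a) = of_bit b + of_bit c"
  by (cases b; cases c) (simp_all add: two_eq_zero_CHAR_2)

lemma of_bit_eq_iff: "(of_bit b :: 'a::{semiring_1,zero_neq_one}) = of_bit c \<longleftrightarrow> b = c"
  by (cases b; cases c) auto

lemma power_card_eq_self:
  fixes x :: "'a::{field,finite}"
  shows "x ^ CARD('a) = x"
proof (cases "x = 0")
  case False
  let ?U = "UNIV - {0::'a}"
  have "(\<Prod>y\<in>?U. x * y) = \<Prod>?U"
    by (rule prod.reindex_bij_witness[where i="\<lambda>y. y / x" and j="\<lambda>y. x * y"]) (use False in auto)
  moreover have "(\<Prod>y\<in>?U. x * y) = x ^ card ?U * \<Prod>?U"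
    by (simp add: prod.distrib)
  moreover have "\<Prod>?U \<noteq> 0" by simp
  ultimately have "x ^ card ?U = 1" by simp
  moreover have "Suc (card ?U) = CARD('a)"
    by (simp add: card_Diff_subset)
  ultimately show ?thesis
    by (metis power_Suc2 mult_1)
next
  case True
  then show ?thesis by simp
qed

lemma sum_power_two_power_CHAR_2:
  fixes f :: "'b \<Rightarrow> 'a::comm_ring_1"
  assumes "CHAR('a) = 2" and "finite S"
  shows "(\<Sum>i\<in>S. f i) ^ 2 ^ k = (\<Sum>i\<in>S. f i ^ 2 ^ k)"
  using assms(2)
  by induction (simp_all add: power_two_power_add_CHAR_2[OF assms(1)] zero_power)

lemma abs_tr_sum_square:
  fixes x :: "'a::{field,finite}"
  assumes "CARD('a) = 2 ^ r"
  shows "(\<Sum>i<r. x ^ 2 ^ i) ^ 2 = (\<Sum>i<r. x ^ 2 ^ i)"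
proof -
  have "(\<Sum>i<r. x ^ 2 ^ i) ^ 2 = (\<Sum>i<r. x ^ 2 ^ Suc i)"
    using sum_power_two_power_CHAR_2[OF CHAR_eq_2_if_card_eq_two_power[OF assms], of "{..<r}" _ 1]
    by (simp only: finite_lessThan power_one_right power_Suc2 power_mult)
  also have "\<dots> = (\<Sum>i<Suc r. x ^ 2 ^ i) - x"
    by (simp only: sum.lessThan_Suc_shift power_0 power_one_right add_diff_cancel_left')
  also have "\<dots> = (\<Sum>i<r. x ^ 2 ^ i)"
    using power_card_eq_self[of x] assms by simp
  finally show ?thesis .
qed

lemma of_bit_abs_tr:
  fixes x :: "'a::{field,finite}"
  assumes "CARD('a) = 2 ^ r"
  shows "of_bit (abs_tr r x) = (\<Sum>i<r. x ^ 2 ^ i)"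
proof -
  let ?t = "\<Sum>i<r. x ^ 2 ^ i"
  have "?t * (?t - 1) = 0"
    using abs_tr_sum_square[OF assms, of x] by (simp add: power2_eq_square algebra_simps)
  then show ?thesis by (auto simp: abs_tr_def)
qed

lemma abs_tr_add:
  fixes x y :: "'a::{field,finite}"
  assumes "CARD('a) = 2 ^ r"
  shows "abs_tr r (x + y) = abs_tr r x + abs_tr r y"
proof -
  have char: "CHAR('a) = 2" by (rule CHAR_eq_2_if_card_eq_two_power[OF assms])
  have "(of_bit (abs_tr r (x + y)) :: 'a) = of_bit (abs_tr r x) + of_bit (abs_tr r y)"
    by (simp only: of_bit_abs_tr[OF assms] power_two_power_add_CHAR_2[OF char] sum.distrib)
  then show ?thesis
    by (simp only: of_bit_add_CHAR_2[OF char, symmetric] of_bit_eq_iff)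
qed

lemma abs_tr_0 [simp]: "abs_tr r (0::'a::field) = 0"
  by (simp add: abs_tr_def zero_power)

lemma abs_tr_of_bit_mult:
  "abs_tr r (of_bit k * (x::'a::field)) = k * abs_tr r x"
  by (cases k) simp_all

lemma abs_tr_sum_of_bit_mult:
  assumes "CARD('a::{field,finite}) = 2 ^ r" and "finite S"
  shows "abs_tr r (\<Sum>g\<in>S. of_bit (u g) * (y g :: 'a)) = (\<Sum>g\<in>S. u g * abs_tr r (y g))"
  using assms(2)
proof induction
  case (insert g S)
  then show ?case
    by (simp only: sum.insert[OF insert(1,2)] abs_tr_add[OF assms(1)] abs_tr_of_bit_mult insert.IH)
qed simp

text \<open>The trace is a polynomial of degree \<open>2^(r-1) < q\<close>, so it cannot vanish on all of \<open>\<bbbF>\<^sub>q\<close>.\<close>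
lemma ex_abs_tr_eq_1:
  assumes "CARD('a::{field,finite}) = 2 ^ r"
  obtains z :: "'a::{field,finite}" where "abs_tr r z = 1"
proof -
  have r: "r > 0" by (rule card_eq_two_power_imp_pos[OF assms])
  define p :: "'a poly" where "p = (\<Sum>i<r. monom 1 (2 ^ i))"
  have "coeff p (2 ^ (r - 1)) = (\<Sum>i<r. if 2 ^ i = (2::nat) ^ (r - 1) then 1 else 0)"
    by (simp add: p_def coeff_sum coeff_monom)
  also have "\<dots> = (\<Sum>i\<in>{r - 1}. 1)"
    by (rule sum.mono_neutral_cong_right) (use r in auto)
  finally have "p \<noteq> 0" by auto
  have "degree p \<le> 2 ^ (r - 1)"
    unfolding p_def
    by (rule degree_sum_le) (auto intro: order.trans[OF degree_monom_le] power_increasing)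
  also have "\<dots> < CARD('a)"
    using assms r by simp
  finally have "card {z. poly p z = 0} < CARD('a)"
    using card_poly_roots_bound[OF \<open>p \<noteq> 0\<close>] by linarith
  then obtain z where "poly p z \<noteq> 0"
    by (metis (mono_tags) UNIV_eq_I mem_Collect_eq less_irrefl)
  then have "(\<Sum>i<r. z ^ 2 ^ i) \<noteq> 0"
    by (simp add: p_def poly_sum poly_monom)
  then show thesis
    using that by (simp add: abs_tr_def)
qed

definition bit_sign :: "bit \<Rightarrow> int" where
  "bit_sign b = (if b = 0 then 1 else -1)"

lemma bit_sign_add: "bit_sign (b + c) = bit_sign b * bit_sign c"
  by (cases b; cases c) (simp_all add: bit_sign_def)

lemma bit_sign_add_1: "bit_sign (b + 1) = - bit_sign b"
  by (cases b) (simp_all add: bit_sign_def)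

lemma bit_add_eq_0_iff: "b + c = 0 \<longleftrightarrow> b = (c::bit)"
  by (cases b; cases c) simp_all

lemma sum_bit_sign_additive:
  fixes h :: "'a::{ab_group_add,finite} \<Rightarrow> bit"
  assumes add: "\<And>x y. h (x + y) = h x + h y"
  shows "(\<Sum>x\<in>UNIV. bit_sign (h x)) = (if \<forall>x. h x = 0 then int CARD('a) else 0)"
proof (cases "\<forall>x. h x = 0")
  case False
  then obtain y where y: "h y = 1" by auto
  have "(\<Sum>x\<in>UNIV. bit_sign (h x)) = (\<Sum>x\<in>UNIV. bit_sign (h (x + y)))"
    by (rule sum.reindex_bij_witness[where i="\<lambda>x. x + y" and j="\<lambda>x. x - y"]) auto
  also have "\<dots> = - (\<Sum>x\<in>UNIV. bit_sign (h x))"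
    by (simp only: add y bit_sign_add_1 sum_negf)
  finally show ?thesis using False by simp
qed (simp add: bit_sign_def)

text \<open>Every additive \<open>f : \<bbbF>\<^sub>q \<rightarrow> \<bbbF>\<^sub>2\<close> is \<open>x \<mapsto> tr(a x)\<close>: otherwise every
  \<open>f + tr(a \<cdot>)\<close> is a nontrivial character, and summing the character sums over \<open>a\<close>
  gives \<open>0\<close>, whereas orthogonality of the characters \<open>tr(a \<cdot>)\<close> makes that double sum \<open>q\<close>.\<close>
lemma additive_bit_eq_abs_tr_mult:
  fixes f :: "'a::{field,finite} \<Rightarrow> bit"
  assumes card: "CARD('a) = 2 ^ r" and add: "\<And>x y. f (x + y) = f x + f y"
  obtains a where "\<And>x. f x = abs_tr r (a * x)"
proof -
  have tr_add_left: "abs_tr r (a * (x + y)) = abs_tr r (a * x) + abs_tr r (a * y)" for a x y :: 'a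
    by (simp only: distrib_left abs_tr_add[OF card])
  have tr_add_right: "abs_tr r ((a + b) * x) = abs_tr r (a * x) + abs_tr r (b * x)" for a b x :: 'a
    by (simp only: distrib_right abs_tr_add[OF card])
  obtain z :: 'a where z: "abs_tr r z = 1" by (rule ex_abs_tr_eq_1[OF card])
  have trivial_iff: "(\<forall>a. abs_tr r (a * x) = 0) \<longleftrightarrow> x = 0" for x :: 'a
  proof
    assume "\<forall>a. abs_tr r (a * x) = 0"
    then have "abs_tr r (z / x * x) = 0" by blast
    with z show "x = 0" by (cases "x = 0") simp_all
  qed simp
  have inner: "(\<Sum>a\<in>UNIV. bit_sign (abs_tr r (a * x))) = (if x = 0 then int CARD('a) else 0)" for x :: 'a
    using sum_bit_sign_additive[of "\<lambda>a. abs_tr r (a * x)", OF tr_add_right] trivial_iff[of x]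
    by simp
  have f0: "f 0 = 0" using add[of 0 0] by (cases "f 0") auto
  have "(\<Sum>a\<in>UNIV. \<Sum>x\<in>UNIV. bit_sign (f x + abs_tr r (a * x)))
      = (\<Sum>x\<in>UNIV. bit_sign (f x) * (\<Sum>a\<in>UNIV. bit_sign (abs_tr r (a * x))))"
    by (subst sum.swap) (simp only: bit_sign_add sum_distrib_left)
  also have "\<dots> = (\<Sum>x\<in>UNIV. if x = 0 then bit_sign (f x) * int CARD('a) else 0)"
    by (rule sum.cong) (simp_all add: inner)
  also have "\<dots> = int CARD('a)"
    by (simp add: f0 bit_sign_def)
  finally have "(\<Sum>a\<in>UNIV. \<Sum>x\<in>UNIV. bit_sign (f x + abs_tr r (a * x))) \<noteq> 0"
    by simp
  then obtain a where "(\<Sum>x\<in>UNIV. bit_sign (f x + abs_tr r (a * x))) \<noteq> 0"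
    by (rule sum.not_neutral_contains_not_neutral)
  moreover have "f (x + y) + abs_tr r (a * (x + y))
      = (f x + abs_tr r (a * x)) + (f y + abs_tr r (a * y))" for x y
    by (simp only: add tr_add_left ac_simps)
  ultimately have "f x + abs_tr r (a * x) = 0" for x
    using sum_bit_sign_additive[of "\<lambda>x. f x + abs_tr r (a * x)"] by (simp split: if_split_asm)
  then show thesis
    using that bit_add_eq_0_iff by meson
qed

text \<open>Two row operations on the identity: the result has determinant \<open>1\<close> and trace \<open>n + c\<close>.\<close>
lemma ex_SL_trace_eq:
  fixes x :: "'a::field"
  assumes "CARD('n::finite) \<ge> 2"
  obtains g :: "'a^'n^'n" where "g \<in> SL" and "trace g = x"
proof -
  have "\<not> CARD('n) \<le> Suc 0" using assms by simp
  then obtain i j :: 'n where ij: "i \<noteq> j" by (auto simp: card_le_Suc0_iff_eq)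
  define c where "c = x - of_nat CARD('n)"
  define A :: "'a^'n^'n" where
    "A = (\<chi> k. if k = i then row i (mat 1) + 1 *s row j (mat 1) else row k (mat 1))"
  define g :: "'a^'n^'n" where
    "g = (\<chi> k. if k = j then row j A + c *s row i A else row k A)"
  have "det g = 1"
    unfolding g_def A_def using ij by (simp add: det_row_operation)
  moreover have "g $ k $ k = 1 + (if k = j then c else 0)" for k
    using ij by (simp add: g_def A_def row_def mat_def)
  then have "trace g = x"
    by (simp add: trace_def sum.distrib c_def)
  ultimately show thesis using that by (simp add: SL_def)
qed

lemma cmap_add:
  assumes "CARD('a::{field,finite}) = 2 ^ r"
  shows "(cmap r (a + b) :: 'a^'n^'n \<Rightarrow> bit) = (\<lambda>g. cmap r a g + cmap r b g)"
  by (auto simp: cmap_def distrib_right abs_tr_add[OF assms] simp del: add_bit_eq_xor)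

lemma cmap_of_bit_mult:
  "(cmap r (of_bit k * a) :: 'a::field^'n^'n \<Rightarrow> bit) = (\<lambda>g. k * cmap r a g)"
proof
  fix g :: "'a^'n^'n"
  show "cmap r (of_bit k * a) g = k * cmap r a g"
    using abs_tr_of_bit_mult[of r k "a * trace g"]
    by (simp add: cmap_def mult.assoc del: mult_bit_eq_and)
qed

lemma cmap_in_code_C_perp:
  assumes "CARD('a::{field,finite}) = 2 ^ r"
  shows "(cmap r a :: 'a^'n^'n \<Rightarrow> bit) \<in> code_C_perp"
  unfolding code_C_perp_def
proof (intro CollectI conjI ballI)
  show "(cmap r a :: 'a^'n^'n \<Rightarrow> bit) \<in> words" by (simp add: words_def cmap_def)
  fix u :: "'a^'n^'n \<Rightarrow> bit"
  assume "u \<in> code_C"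
  then have u: "(\<Sum>g\<in>SL. of_bit (u g) * trace g) = (0::'a)" by (simp add: code_C_def)
  have "(\<Sum>g\<in>SL. u g * cmap r a g) = (\<Sum>g\<in>SL. u g * abs_tr r (a * trace g))"
    by (rule sum.cong) (simp_all add: cmap_def)
  also have "\<dots> = abs_tr r (\<Sum>g\<in>SL. of_bit (u g) * (a * trace g))"
    by (rule abs_tr_sum_of_bit_mult[OF assms finite, symmetric])
  also have "(\<Sum>g\<in>SL. of_bit (u g) * (a * trace g)) = a * (\<Sum>g\<in>SL. of_bit (u g) * trace g)"
    by (simp only: sum_distrib_left mult.left_commute)
  finally show "(\<Sum>g\<in>SL. u g * cmap r a g) = 0" using u by simp
qed

text \<open>Obtained by testing \<open>w\<close> against the weight-three word of \<open>C\<close> supported on \<open>h1, h2, h3\<close>.\<close>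
lemma code_C_perp_add_three_eq_0:
  fixes w :: "'a::{field,finite}^'n^'n \<Rightarrow> bit"
  assumes char: "CHAR('a) = 2" and w: "w \<in> code_C_perp"
    and h: "h1 \<in> SL" "h2 \<in> SL" "h3 \<in> SL" and tr: "trace h1 + trace h2 + trace h3 = 0"
  shows "w h1 + w h2 + w h3 = 0"
proof -
  define \<delta> where "\<delta> h x = (if x = h then 1 else (0::bit))" for h x :: "'a^'n^'n"
  define u where "u x = \<delta> h1 x + \<delta> h2 x + \<delta> h3 x" for x
  have sum_\<delta>_field: "(\<Sum>x\<in>SL. of_bit (\<delta> h x) * t x) = t h" if "h \<in> SL" for h and t :: "_ \<Rightarrow> 'a"
  proof -
    have "(\<Sum>x\<in>SL. of_bit (\<delta> h x) * t x) = (\<Sum>x\<in>SL. if x = h then t x else 0)"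
      by (rule sum.cong) (simp_all add: \<delta>_def)
    then show ?thesis using that by simp
  qed
  have sum_\<delta>_bit: "(\<Sum>x\<in>SL. \<delta> h x * b x) = b h" if "h \<in> SL" for h b
  proof -
    have "(\<Sum>x\<in>SL. \<delta> h x * b x) = (\<Sum>x\<in>SL. if x = h then b x else 0)"
      by (rule sum.cong) (simp_all add: \<delta>_def del: mult_bit_eq_and)
    then show ?thesis using that by simp
  qed
  have "u \<in> words" using h by (auto simp: words_def u_def \<delta>_def)
  moreover have "(\<Sum>x\<in>SL. of_bit (u x) * trace x) = (0::'a)"
    by (simp only: u_def of_bit_add_CHAR_2[OF char] distrib_right sum.distrib sum_\<delta>_field h tr)
  ultimately have "u \<in> code_C" by (simp add: code_C_def)
  then have "(\<Sum>x\<in>SL. u x * w x) = 0" using w by (simp add: code_C_perp_def)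
  then show ?thesis by (simp only: u_def distrib_right sum.distrib sum_\<delta>_bit h)
qed

lemma code_C_perp_factors_through_trace:
  fixes w :: "'a::{field,finite}^'n^'n \<Rightarrow> bit"
  assumes char: "CHAR('a) = 2" and n: "CARD('n) \<ge> 2" and w: "w \<in> code_C_perp"
  obtains f :: "'a \<Rightarrow> bit" where "\<And>x y. f (x + y) = f x + f y" and "\<And>g. g \<in> SL \<Longrightarrow> w g = f (trace g)"
proof -
  have "\<forall>x. \<exists>g::'a^'n^'n. g \<in> SL \<and> trace g = x"
    using ex_SL_trace_eq[OF n] by blast
  then have "\<exists>rep :: 'a \<Rightarrow> 'a^'n^'n. \<forall>x. rep x \<in> SL \<and> trace (rep x) = x"
    by (rule choice)
  then obtain rep :: "'a \<Rightarrow> 'a^'n^'n" where rep_SL: "\<And>x. rep x \<in> SL" and trace_rep: "\<And>x. trace (rep x) = x"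
    by blast
  define f where "f x = w (rep x)" for x
  note three = code_C_perp_add_three_eq_0[OF char w]
  have "f 0 + f 0 + f 0 = 0"
    unfolding f_def by (rule three[OF rep_SL rep_SL rep_SL]) (simp only: trace_rep add_0_right)
  then have f0: "f 0 = 0" by (cases "f 0") simp_all
  have "f x + f y + f (x + y) = 0" for x y
    unfolding f_def
    by (rule three[OF rep_SL rep_SL rep_SL]) (simp only: trace_rep add_self_CHAR_2[OF char])
  then have "f (x + y) = f x + f y" for x y
    unfolding bit_add_eq_0_iff by (rule sym)
  moreover have "w g + f (trace g) + f 0 = 0" if "g \<in> SL" for g
    unfolding f_def
    by (rule three[OF that rep_SL rep_SL]) (simp only: trace_rep add_0_right add_self_CHAR_2[OF char])
  then have "w g = f (trace g)" if "g \<in> SL" for g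
    using that by (simp only: f0 add_0_right bit_add_eq_0_iff)
  ultimately show thesis by (rule that)
qed

lemma inj_cmap:
  assumes card: "CARD('a::{field,finite}) = 2 ^ r" and n: "CARD('n) \<ge> 2"
  shows "inj (cmap r :: 'a \<Rightarrow> ('a^'n^'n \<Rightarrow> bit))"
proof (rule injI, rule ccontr)
  fix a b :: 'a
  assume eq: "(cmap r a :: 'a^'n^'n \<Rightarrow> bit) = cmap r b" and "a \<noteq> b"
  obtain z :: 'a where z: "abs_tr r z = 1" by (rule ex_abs_tr_eq_1[OF card])
  obtain g :: "'a^'n^'n" where g: "g \<in> SL" "trace g = z / (a - b)" by (rule ex_SL_trace_eq[OF n])
  have "cmap r b g = cmap r (a - b) g + cmap r b g"
    using fun_cong[OF cmap_add[OF card, of "a - b" b], of g] eq by simp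
  then have "cmap r (a - b) g = 0"
    by (cases "cmap r (a - b) g"; cases "cmap r b g") simp_all
  moreover have "cmap r (a - b) g = 1"
    using g z \<open>a \<noteq> b\<close> by (simp add: cmap_def)
  ultimately show False by simp
qed

lemma code_C_perp_subset_range_cmap:
  assumes card: "CARD('a::{field,finite}) = 2 ^ r" and n: "CARD('n) \<ge> 2"
  shows "code_C_perp \<subseteq> range (cmap r :: 'a \<Rightarrow> ('a^'n^'n \<Rightarrow> bit))"
proof
  fix w :: "'a^'n^'n \<Rightarrow> bit"
  assume w: "w \<in> code_C_perp"
  obtain f :: "'a \<Rightarrow> bit" where add: "\<And>x y. f (x + y) = f x + f y" and wf: "\<And>g. g \<in> SL \<Longrightarrow> w g = f (trace g)"
    using code_C_perp_factors_through_trace[OF CHAR_eq_2_if_card_eq_two_power[OF card] n w] by blast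
  obtain a where "\<And>x. f x = abs_tr r (a * x)"
    using additive_bit_eq_abs_tr_mult[OF card add] by blast
  with w wf have "w = cmap r a"
    by (auto simp: cmap_def code_C_perp_def words_def)
  then show "w \<in> range (cmap r)" by blast
qed

theorem proposition7:
  fixes s r :: nat
  assumes "s > 0" and "r > 0"
    and "CARD('n::finite) = 2 ^ s"
    and "CARD('a::{field,finite}) = 2 ^ r"
  shows "bij_betw (cmap r :: 'a \<Rightarrow> ('a^'n^'n \<Rightarrow> bit)) UNIV code_C_perp
       \<and> (\<forall>a b. (cmap r (a + b) :: 'a^'n^'n \<Rightarrow> bit) = (\<lambda>g. cmap r a g + cmap r b g))
       \<and> (\<forall>(k::bit) a. (cmap r (of_bit k * a) :: 'a^'n^'n \<Rightarrow> bit) = (\<lambda>g. k * cmap r a g))"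
proof -
  have "(2::nat) ^ 1 \<le> 2 ^ s"
    using \<open>s > 0\<close> by (intro power_increasing) simp_all
  then have n: "CARD('n) \<ge> 2" using assms(3) by simp
  have "bij_betw (cmap r :: 'a \<Rightarrow> ('a^'n^'n \<Rightarrow> bit)) UNIV code_C_perp"
    unfolding bij_betw_def
    using inj_cmap[OF assms(4) n] code_C_perp_subset_range_cmap[OF assms(4) n]
      cmap_in_code_C_perp[OF assms(4)] by blast
  then show ?thesis
    using cmap_add[OF assms(4)] cmap_of_bit_mult by blast
qed

end
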